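(* Let $A\subseteq\mathbb{N}$ be infinite and coinfinite and let $Q=\{A\}$, a quantifier of type $\langle 1\rangle$ (note $Q=Q_A\cap Q^A$). Then $\mathrm{Aut}(Q)=\{g\in S_\infty: g(A)=A\}$, and every subset of $\mathbb{N}$ defined by an $\mathscr{L}_{\omega_1\omega}(Q)$-formula $\varphi(x,c_0,\dots,c_{t})$ with parameters $c_i\in\{0,\dots,t\}$ is either a subset of $\{0,\dots,t\}$ or contains $\mathbb{N}\setminus\{0,\dots,t\}$. In particular the orbits of $\mathrm{Aut}(Q)$ (e.g. the set $A$, which is the orbit of any element of $A$) are not all definable in $\mathscr{L}_{\omega_1\omega}(Q)$.
   Context: A quantifier of type $\langle k\rangle$ on $\mathbb{N}$ is a family of subsets of $\mathbb{N}^k$. For $A\subseteq\mathbb{N}^k$, $Q_A=\{X\subseteq\mathbb{N}^k:A\subseteq X\}$ and $Q^A=\{X\subseteq\mathbb{N}^k:X\subseteq A\}$. A permutation $f$ of $\mathbb{N}$ fixes $Q$ if $B\in Q\iff f(B)\in Q$ for all $B$; $\mathrm{Aut}(Q)$ is the group of such permutations. $\mathscr{L}_{\omega_1\omega}(Q)$ extends $\mathscr{L}_{\omega_1\omega}$ (countable conjunctions/disjunctions, finite quantifier strings) by formulas $Qx\,\varphi(x,y)$ with $\mathbb{N}\models Qx\,\varphi(x,b)$ iff $\{a:\mathbb{N}\models\varphi(a,b)\}\in Q$; formulas have no non-logical symbols besides $Q$. A set $B\subseteq\mathbb{N}^n$ is definable in $\mathscr{L}_{\omega_1\omega}(Q)$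 if there is a parameter-free formula $\varphi(x_1,\ldots,x_n)$ with $b\in B\iff\mathbb{N}\models\varphi(b)$. *)

theory Defs
  imports Main
begin

text \<open>Formulas of the infinitary logic L_{omega_1 omega}(Q) for a quantifier Q of type <1>
  on the natural numbers.
  Countable conjunctions are indexed by nat (finite conjunctions by repetition);
  disjunction and universal quantification are definable via negation.\<close>

datatype form =
    Eq nat nat
  | Neg form
  | Conj "nat \<Rightarrow> form"
  | Ex nat form
  | Qf nat form

primrec sat :: "nat set set \<Rightarrow> form \<Rightarrow> (nat \<Rightarrow> nat) \<Rightarrow> bool" where
  "sat Q (Eq i j) s = (s i = s j)"
| "sat Q (Neg \<phi>) s = (\<not> sat Q \<phi> s)"
| "sat Q (Conj F) s = (\<forall>n. sat Q (F n) s)"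
| "sat Q (Ex v \<phi>) s = (\<exists>a. sat Q \<phi> (s(v := a)))"
| "sat Q (Qf v \<phi>) s = ({a. sat Q \<phi> (s(v := a))} \<in> Q)"

primrec fv :: "form \<Rightarrow> nat set" where
  "fv (Eq i j) = {i, j}"
| "fv (Neg \<phi>) = fv \<phi>"
| "fv (Conj F) = (\<Union>n. fv (F n))"
| "fv (Ex v \<phi>) = fv \<phi> - {v}"
| "fv (Qf v \<phi>) = fv \<phi> - {v}"

text \<open>Well-formed L_{omega_1 omega} formulas have finitely many free variables
  (imposed on every subformula).\<close>
primrec wf :: "form \<Rightarrow> bool" where
  "wf (Eq i j) = True"
| "wf (Neg \<phi>) = wf \<phi>"
| "wf (Conj F) = ((\<forall>n. wf (F n)) \<and> finite (\<Union>n. fv (F n)))"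
| "wf (Ex v \<phi>) = wf \<phi>"
| "wf (Qf v \<phi>) = wf \<phi>"

definition Aut :: "nat set set \<Rightarrow> (nat \<Rightarrow> nat) set" where
  "Aut Q = {f. bij f \<and> (\<forall>B. B \<in> Q \<longleftrightarrow> f ` B \<in> Q)}"

definition definable1 :: "nat set set \<Rightarrow> nat set \<Rightarrow> bool" where
  "definable1 Q B \<longleftrightarrow> (\<exists>\<phi> x. wf \<phi> \<and> fv \<phi> \<subseteq> {x} \<and>
      (\<forall>s a. a \<in> B \<longleftrightarrow> sat Q \<phi> (s(x := a))))"

end

theory Submission
  imports Defs "HOL-Combinatorics.Transposition"
begin

(* The point is that L(Q) cannot tell A apart
   from its complement, because no definable set is infinite and coinfinite.
   1. Satisfaction depends only on the values of the free variables (coincidence lemma).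
   2. Automorphisms of a quantifier preserve truth in L(Q).  Every permutation fixes the
      empty quantifier {}, so over {} two values not taken by the parameters can be swapped:
      they are indiscernible.
   3. Hence a set defined over {} with parameter values G is contained in G or contains - G.
      For a well-formed formula G is finite, so this set is finite or cofinite.  A quantifier
      all of whose members are infinite and coinfinite therefore never holds on a definable
      set, and L(Q) has the same semantics as L({}).  This yields the dichotomy of the
      theorem and shows that only {} and N are definable without parameters.
   4. Aut {A} consists of the permutations preserving A, and it is transitive on A because it
      contains the transpositions of points of A. *)

lemma finite_fv_if_wf: "wf \<phi> \<Longrightarrow> finite (fv \<phi>)"
  by (induction \<phi>) auto

lemma sat_coincidence:
  "(\<forall>i\<in>fv \<phi>. s i = s' i) \<Longrightarrow> sat Q \<phi> s = sat Q \<phi> s'"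
proof (induction \<phi> arbitrary: s s')
  case (Conj F)
  have "sat Q (F n) s = sat Q (F n) s'" for n
  proof -
    have "\<forall>i\<in>fv (F n). s i = s' i"
      using Conj.prems by auto
    then show ?thesis
      using Conj.IH[OF rangeI] by blast
  qed
  then show ?case by simp
next
  case (Ex v \<phi>)
  have "sat Q \<phi> (s(v := a)) = sat Q \<phi> (s'(v := a))" for a
    by (rule Ex.IH) (use Ex.prems in auto)
  then show ?case by simp
next
  case (Qf v \<phi>)
  have "sat Q \<phi> (s(v := a)) = sat Q \<phi> (s'(v := a))" for a
    by (rule Qf.IH) (use Qf.prems in auto)
  then show ?case by simp
qed simp_all

lemma comp_fun_upd: "(\<pi> \<circ> s)(v := \<pi> b) = \<pi> \<circ> s(v := b)"
  by auto

lemma Collect_eq_image_surj: "surj \<pi> \<Longrightarrow> {a. P a} = \<pi> ` {b. P (\<pi> b)}"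
  by (auto intro: image_eqI[OF surj_f_inv_f[symmetric]])

text \<open>In the Q-case, the set defined after moving is the image under
  \<pi> of the set defined before.\<close>
lemma sat_Aut:
  assumes aut: "\<pi> \<in> Aut Q"
  shows "sat Q \<phi> (\<pi> \<circ> s) = sat Q \<phi> s"
proof (induction \<phi> arbitrary: s)
  have bij: "bij \<pi>" and fixes_Q: "\<And>B. B \<in> Q \<longleftrightarrow> \<pi> ` B \<in> Q"
    using aut unfolding Aut_def by auto
  {
    case (Eq i j)
    show ?case by (simp add: bij_is_inj[OF bij] inj_eq)
  next
    case (Neg \<phi>)
    then show ?case by simp
  next
    case (Conj F)
    then show ?case by simp
  next
    case (Ex v \<phi>)
    have "(\<exists>a. sat Q \<phi> ((\<pi> \<circ> s)(v := a))) \<longleftrightarrow> (\<exists>b. sat Q \<phi> ((\<pi> \<circ> s)(v := \<pi> b)))"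
      using bij_is_surj[OF bij] by (metis surj_f_inv_f)
    also have "\<dots> \<longleftrightarrow> (\<exists>b. sat Q \<phi> (\<pi> \<circ> s(v := b)))"
      by (simp only: comp_fun_upd)
    also have "\<dots> \<longleftrightarrow> (\<exists>b. sat Q \<phi> (s(v := b)))"
      by (simp only: Ex.IH)
    finally show ?case
      by (simp only: sat.simps)
  next
    case (Qf v \<phi>)
    have "{a. sat Q \<phi> ((\<pi> \<circ> s)(v := a))} = \<pi> ` {b. sat Q \<phi> ((\<pi> \<circ> s)(v := \<pi> b))}"
      by (rule Collect_eq_image_surj[OF bij_is_surj[OF bij]])
    also have "\<dots> = \<pi> ` {b. sat Q \<phi> (s(v := b))}"
      by (simp only: comp_fun_upd Qf.IH)
    finally show ?case
      using fixes_Q by (simp only: sat.simps)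
  }
qed

lemma Aut_empty: "Aut {} = {f. bij f}"
  by (simp add: Aut_def)

text \<open>Two values that are not taken by the parameters are indiscernible, provided their
  transposition is an automorphism: the transposition moves one assignment to the other
  without affecting the parameters.\<close>
lemma sat_transpose_indiscernible:
  assumes "transpose a b \<in> Aut Q"
    and "a \<notin> s ` (fv \<phi> - {x})" and "b \<notin> s ` (fv \<phi> - {x})"
  shows "sat Q \<phi> (s(x := a)) = sat Q \<phi> (s(x := b))"
proof -
  have "sat Q \<phi> (s(x := a)) = sat Q \<phi> (transpose a b \<circ> s(x := a))"
    using sat_Aut[OF assms(1)] by simp
  also have "\<dots> = sat Q \<phi> (s(x := b))"
    by (rule sat_coincidence) (use assms(2,3) in \<open>auto simp: transpose_def\<close>)
  finally show ?thesis .
qed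

lemma sat_empty_defines_trivial:
  fixes s :: "nat \<Rightarrow> nat" and \<phi> :: form and x :: nat
  defines "G \<equiv> s ` (fv \<phi> - {x})"
  shows "{a. sat {} \<phi> (s(x := a))} \<subseteq> G \<or> - G \<subseteq> {a. sat {} \<phi> (s(x := a))}"
proof -
  have "sat {} \<phi> (s(x := a)) = sat {} \<phi> (s(x := b))" if "a \<notin> G" "b \<notin> G" for a b
    using sat_transpose_indiscernible[of a b "{}"] that by (simp add: Aut_empty G_def)
  then show ?thesis
    by blast
qed

text \<open>If every member of Q is infinite and coinfinite, then Q never holds on a definable
  set, so L(Q) has the same semantics as L({}) on well-formed formulas.\<close>
lemma sat_eq_sat_empty:
  assumes Q: "\<And>B. B \<in> Q \<Longrightarrow> infinite B \<and> infinite (- B)"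
  shows "wf \<phi> \<Longrightarrow> sat Q \<phi> s = sat {} \<phi> s"
proof (induction \<phi> arbitrary: s)
  case (Qf v \<phi>)
  let ?S = "{a. sat {} \<phi> (s(v := a))}"
  let ?G = "s ` (fv \<phi> - {v})"
  have "finite ?G"
    using Qf.prems finite_fv_if_wf by simp
  moreover have "?S \<subseteq> ?G \<or> - ?G \<subseteq> ?S"
    by (rule sat_empty_defines_trivial)
  then have "?S \<subseteq> ?G \<or> - ?S \<subseteq> ?G"
    by blast
  ultimately have "finite ?S \<or> finite (- ?S)"
    using finite_subset by blast
  then have "?S \<notin> Q"
    using Q by blast
  moreover have "{a. sat Q \<phi> (s(v := a))} = ?S"
    using Qf by simp
  ultimately show ?case by simp
qed simp_all

lemma definable_dichotomy:
  assumes Q: "\<And>B. B \<in> Q \<Longrightarrow> infinite B \<and> infinite (- B)"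
    and "wf \<phi>" and F: "s ` (fv \<phi> - {x}) \<subseteq> F"
  shows "{a. sat Q \<phi> (s(x := a))} \<subseteq> F \<or> - F \<subseteq> {a. sat Q \<phi> (s(x := a))}"
proof -
  have "{a. sat Q \<phi> (s(x := a))} = {a. sat {} \<phi> (s(x := a))}"
    using sat_eq_sat_empty[OF Q \<open>wf \<phi>\<close>] by simp
  moreover have "{a. sat {} \<phi> (s(x := a))} \<subseteq> s ` (fv \<phi> - {x})
      \<or> - s ` (fv \<phi> - {x}) \<subseteq> {a. sat {} \<phi> (s(x := a))}"
    by (rule sat_empty_defines_trivial)
  ultimately show ?thesis
    using F by blast
qed

lemma definable1_trivial:
  assumes Q: "\<And>B. B \<in> Q \<Longrightarrow> infinite B \<and> infinite (- B)"
    and "definable1 Q D"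
  shows "D = {} \<or> D = UNIV"
proof -
  obtain \<phi> x where "wf \<phi>" "fv \<phi> \<subseteq> {x}"
    and defines_D: "\<And>s a. a \<in> D \<longleftrightarrow> sat Q \<phi> (s(x := a))"
    using \<open>definable1 Q D\<close> unfolding definable1_def by blast
  have "D = {a. sat Q \<phi> (id(x := a))}"
    by (rule set_eqI) (simp only: mem_Collect_eq defines_D)
  moreover have "{a. sat Q \<phi> (id(x := a))} \<subseteq> {} \<or> - {} \<subseteq> {a. sat Q \<phi> (id(x := a))}"
    by (rule definable_dichotomy[OF Q \<open>wf \<phi>\<close>]) (use \<open>fv \<phi> \<subseteq> {x}\<close> in auto)
  ultimately show ?thesis
    by blast
qed

lemma parameter_values_bounded:
  fixes v s :: "nat \<Rightarrow> nat" and t :: nat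
  assumes fv: "fv \<phi> \<subseteq> insert x (v ` {0..t})" and bounded: "\<forall>i\<le>t. s (v i) \<le> t"
  shows "s ` (fv \<phi> - {x}) \<subseteq> {0..t}"
proof
  fix y assume "y \<in> s ` (fv \<phi> - {x})"
  then obtain i where "i \<in> fv \<phi> - {x}" "y = s i"
    by blast
  then have "i \<in> v ` {0..t}"
    using fv by blast
  then obtain j where "j \<in> {0..t}" "i = v j"
    by blast
  then show "y \<in> {0..t}"
    using bounded \<open>y = s i\<close> by simp
qed

lemma Aut_singleton: "Aut {A} = {g. bij g \<and> g ` A = A}"
proof -
  have "(g ` B = A) = (B = A)" if "bij g" "g ` A = A" for g :: "nat \<Rightarrow> nat" and B
    using that by (metis bij_is_inj inj_image_eq_iff)
  then show ?thesis
    unfolding Aut_def by (metis (mono_tags, lifting) insert_iff singletonD)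
qed

lemma transpose_in_Aut_singleton:
  "a \<in> A \<Longrightarrow> b \<in> A \<Longrightarrow> transpose a b \<in> Aut {A}"
  by (simp add: Aut_singleton)

lemma orbit_Aut_singleton:
  assumes "a \<in> A"
  shows "{g a | g. g \<in> Aut {A}} = A"
proof
  show "{g a | g. g \<in> Aut {A}} \<subseteq> A"
    using assms by (auto simp: Aut_singleton)
  show "A \<subseteq> {g a | g. g \<in> Aut {A}}"
  proof
    fix b assume "b \<in> A"
    then have "transpose a b \<in> Aut {A}" "transpose a b a = b"
      using assms transpose_in_Aut_singleton by auto
    then show "b \<in> {g a | g. g \<in> Aut {A}}"
      unfolding mem_Collect_eq by metis
  qed
qed

theorem mainTheorem11:
  fixes A :: "nat set"
  assumes "infinite A" and "infinite (- A)"
  shows "Aut {A} = {g. bij g \<and> g ` A = A}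
     \<and> (\<forall>\<phi> x (v :: nat \<Rightarrow> nat) (t :: nat) (s :: nat \<Rightarrow> nat).
           wf \<phi> \<and> fv \<phi> \<subseteq> insert x (v ` {0..t}) \<and> x \<notin> v ` {0..t}
           \<and> (\<forall>i\<le>t. s (v i) \<le> t)
           \<longrightarrow> {a. sat {A} \<phi> (s(x := a))} \<subseteq> {0..t}
             \<or> - {0..t} \<subseteq> {a. sat {A} \<phi> (s(x := a))})
     \<and> (\<forall>a\<in>A. {g a | g. g \<in> Aut {A}} = A)
     \<and> \<not> definable1 {A} A"
proof (intro conjI allI impI ballI)
  have Q: "\<And>B. B \<in> {A} \<Longrightarrow> infinite B \<and> infinite (- B)"
    using assms by simp
  show "Aut {A} = {g. bij g \<and> g ` A = A}"
    by (rule Aut_singleton)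
  show "{a. sat {A} \<phi> (s(x := a))} \<subseteq> {0..t} \<or> - {0..t} \<subseteq> {a. sat {A} \<phi> (s(x := a))}"
    if hyp: "wf \<phi> \<and> fv \<phi> \<subseteq> insert x (v ` {0..t}) \<and> x \<notin> v ` {0..t} \<and> (\<forall>i\<le>t. s (v i) \<le> t)"
    for \<phi> x v t s
  proof (rule definable_dichotomy)
    show "wf \<phi>"
      using hyp by blast
    show "s ` (fv \<phi> - {x}) \<subseteq> {0..t}"
      by (rule parameter_values_bounded) (use hyp in blast)+
  qed (fact Q)
  show "{g a | g. g \<in> Aut {A}} = A" if "a \<in> A" for a
    using orbit_Aut_singleton[OF that] .
  show "\<not> definable1 {A} A"
  proof
    assume "definable1 {A} A"
    with Q have "A = {} \<or> A = UNIV"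
      by (rule definable1_trivial)
    with assms show False
      by auto
  qed
qed

end
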